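(* Let $\alpha,\beta>-1$. There exists $T>0$ such that, for $T$ sufficiently large, $$\widetilde{\mathbb{G}}_t^{\alpha,\beta}(x,y)\simeq(xy)^{\alpha+1/2}\big((1-x)(1-y)\big)^{\beta+1/2}\exp\Big(-t\pi^2\Big(\frac{\alpha+\beta+1}{2}\Big)^2\Big),\qquad t\ge T,$$ uniformly in $x,y\in(0,1)$ (and $t\ge T$).
   Context: For $\alpha,\beta>-1$ let $\mathcal{P}_n^{\alpha,\beta}(\theta)=c_n^{\alpha,\beta}P_n^{\alpha,\beta}(\cos\theta)$, $n\ge0$, $\theta\in(0,\pi)$, where $P_n^{\alpha,\beta}$ are the classical Jacobi polynomials and $c_n^{\alpha,\beta}>0$ make $\{\mathcal{P}_n^{\alpha,\beta}\}$ orthonormal in $L^2((0,\pi),(\sin\frac\theta2)^{2\alpha+1}(\cos\frac\theta2)^{2\beta+1}d\theta)$. Let $\phi_n^{\alpha,\beta}(\theta)=(\sin\frac\theta2)^{\alpha+1/2}(\cos\frac\theta2)^{\beta+1/2}\mathcal{P}_n^{\alpha,\beta}(\theta)$ and $\widetilde{\phi}_n^{\alpha,\beta}(x)=\sqrt{\pi}\,\phi_n^{\alpha,\beta}(\pi x)$, $x\in(0,1)$, an orthonormal basis of $L^2((0,1),dx)$. The heat kernel is $\widetilde{\mathbb{G}}_t^{\alpha,\beta}(x,y)=\sum_{n\ge0}\exp\big(-t\pi^2(n+\frac{\alpha+\beta+1}{2})^2\big)\widetilde{\phi}_n^{\alpha,\beta}(x)\widetilde{\phi}_n^{\alpha,\beta}(y)$,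 $t>0$. $X\simeq Y$ denotes two-sided comparison with constants independent of $x,y,t$. *)

theory Defs
  imports "HOL-Analysis.Analysis"
begin

definition jacobiP :: "real \<Rightarrow> real \<Rightarrow> nat \<Rightarrow> real \<Rightarrow> real" where
  "jacobiP a b n x =
     (\<Sum>k\<le>n. ((real n + a) gchoose (n - k)) * ((real n + b) gchoose k)
              * ((x - 1) / 2) ^ k * ((x + 1) / 2) ^ (n - k))"

definition jacobi_weight :: "real \<Rightarrow> real \<Rightarrow> real \<Rightarrow> real" where
  "jacobi_weight a b \<theta> = sin (\<theta> / 2) powr (2 * a + 1) * cos (\<theta> / 2) powr (2 * b + 1)"

definition jacobi_c :: "real \<Rightarrow> real \<Rightarrow> nat \<Rightarrow> real" where
  "jacobi_c a b n = 1 / sqrt (LBINT \<theta>:{0<..<pi}. (jacobiP a b n (cos \<theta>))\<^sup>2 * jacobi_weight a b \<theta>)"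

definition jacobi_P_norm :: "real \<Rightarrow> real \<Rightarrow> nat \<Rightarrow> real \<Rightarrow> real" where
  "jacobi_P_norm a b n \<theta> = jacobi_c a b n * jacobiP a b n (cos \<theta>)"

definition jacobi_phi :: "real \<Rightarrow> real \<Rightarrow> nat \<Rightarrow> real \<Rightarrow> real" where
  "jacobi_phi a b n \<theta> = sin (\<theta> / 2) powr (a + 1/2) * cos (\<theta> / 2) powr (b + 1/2) * jacobi_P_norm a b n \<theta>"

definition jacobi_phi_tilde :: "real \<Rightarrow> real \<Rightarrow> nat \<Rightarrow> real \<Rightarrow> real" where
  "jacobi_phi_tilde a b n x = sqrt pi * jacobi_phi a b n (pi * x)"

definition jacobi_heat_kernel :: "real \<Rightarrow> real \<Rightarrow> real \<Rightarrow> real \<Rightarrow> real \<Rightarrow> real" where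
  "jacobi_heat_kernel a b t x y =
     (\<Sum>n. exp (- t * pi\<^sup>2 * (real n + (a + b + 1) / 2)\<^sup>2)
           * jacobi_phi_tilde a b n x * jacobi_phi_tilde a b n y)"

end

theory Submission
  imports Defs "HOL-Real_Asymp.Real_Asymp"
begin

text \<open>Factor the n-th term of the kernel as
  \<open>pi S(x) S(y) exp(-t pi\<^sup>2 s\<^sup>2) \<cdot> exp(-t pi\<^sup>2 n (n + 2s)) c\<^sub>n\<^sup>2 P\<^sub>n(cos pi x) P\<^sub>n(cos pi y)\<close>,
  where \<open>s = (a + b + 1)/2\<close> and \<open>S(x) = sin(pi x/2)\<^bsup>a+1/2\<^esup> cos(pi x/2)\<^bsup>b+1/2\<^esup>\<close> is comparable
  to \<open>x\<^bsup>a+1/2\<^esup> (1 - x)\<^bsup>b+1/2\<^esup>\<close>. The term \<open>n = 0\<close> is \<open>c\<^sub>0\<^sup>2\<close>, and for \<open>n \<ge> 1\<close> the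
  exponent \<open>n (n + 2s) \<ge> 1 + 2s > 0\<close>, so the rest of the series is at most
  \<open>exp(-(t - 1) pi\<^sup>2 (1 + 2s))\<close> times a fixed convergent series and falls below \<open>c\<^sub>0\<^sup>2/2\<close>
  for large \<open>t\<close>. Convergence uses only crude bounds: \<open>|P\<^sub>n| \<le> B\<^sub>n\<close> on \<open>[-1,1]\<close>, the sum of
  the absolute values of its coefficients, and \<open>c\<^sub>n\<^sup>2 B\<^sub>n\<^sup>2 \<le> Z\<^sub>n\<^bsup>O(n)\<^esup>\<close> with \<open>Z\<^sub>n = O(n)\<close>. The
  latter holds because \<open>P\<^sub>n(cos \<theta>) \<ge> P\<^sub>n(1)/2\<close> on an interval \<open>[0, \<tau>\<^sub>n]\<close> of polynomially small
  length, which bounds the normalising integral \<open>1/c\<^sub>n\<^sup>2\<close> from below.\<close>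

section \<open>Coefficient bounds for Jacobi polynomials\<close>

definition jacobi_coeff_sum :: "real \<Rightarrow> real \<Rightarrow> nat \<Rightarrow> real" where
  "jacobi_coeff_sum a b n = (\<Sum>k\<le>n. \<bar>(real n + a) gchoose (n - k)\<bar> * \<bar>(real n + b) gchoose k\<bar>)"

lemma jacobi_coeff_sum_nonneg: "0 \<le> jacobi_coeff_sum a b n"
  unfolding jacobi_coeff_sum_def by (intro sum_nonneg) auto

lemma abs_jacobiP_le_coeff_sum:
  assumes "\<bar>u\<bar> \<le> 1"
  shows "\<bar>jacobiP a b n u\<bar> \<le> jacobi_coeff_sum a b n"
proof -
  have X: "\<bar>(u - 1) / 2\<bar> \<le> 1" and Y: "\<bar>(u + 1) / 2\<bar> \<le> 1" using assms by auto
  have "\<bar>jacobiP a b n u\<bar> \<le> (\<Sum>k\<le>n. \<bar>((real n + a) gchoose (n - k)) * ((real n + b) gchoose k)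
              * ((u - 1) / 2) ^ k * ((u + 1) / 2) ^ (n - k)\<bar>)"
    unfolding jacobiP_def by (rule sum_abs)
  also have "\<dots> \<le> jacobi_coeff_sum a b n"
    unfolding jacobi_coeff_sum_def
  proof (rule sum_mono)
    fix k assume "k \<in> {..n}"
    have "\<bar>((u - 1) / 2) ^ k * ((u + 1) / 2) ^ (n - k)\<bar> \<le> 1"
      using X Y by (simp add: abs_mult power_abs power_le_one mult_le_one)
    then have "\<bar>((real n + a) gchoose (n - k)) * ((real n + b) gchoose k)\<bar>
        * \<bar>((u - 1) / 2) ^ k * ((u + 1) / 2) ^ (n - k)\<bar>
        \<le> \<bar>((real n + a) gchoose (n - k)) * ((real n + b) gchoose k)\<bar>"
      by (rule mult_left_le) simp
    then show "\<bar>((real n + a) gchoose (n - k)) * ((real n + b) gchoose k)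
              * ((u - 1) / 2) ^ k * ((u + 1) / 2) ^ (n - k)\<bar>
        \<le> \<bar>(real n + a) gchoose (n - k)\<bar> * \<bar>(real n + b) gchoose k\<bar>"
      by (simp add: abs_mult mult.assoc)
  qed
  finally show ?thesis .
qed

lemma jacobiP_at_1: "jacobiP a b n 1 = (real n + a) gchoose n"
proof -
  have "jacobiP a b n 1 = (\<Sum>k\<le>n. (if k = 0 then ((real n + a) gchoose n) else 0))"
    unfolding jacobiP_def by (intro sum.cong) (auto simp: power_0_left)
  also have "\<dots> = (real n + a) gchoose n" by (simp add: sum.delta)
  finally show ?thesis .
qed

lemma jacobiP_0 [simp]: "jacobiP a b 0 u = 1"
  by (simp add: jacobiP_def)

lemma abs_gchoose_diag_le_coeff_sum: "\<bar>(real n + a) gchoose n\<bar> \<le> jacobi_coeff_sum a b n"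
proof -
  have "\<bar>(real n + a) gchoose (n - 0)\<bar> * \<bar>(real n + b) gchoose 0\<bar> \<le> jacobi_coeff_sum a b n"
    unfolding jacobi_coeff_sum_def by (rule member_le_sum) auto
  then show ?thesis by simp
qed

text \<open>Every monomial other than \<open>k = 0\<close> carries the factor \<open>(u - 1)/2\<close>, and the \<open>k = 0\<close>
  monomial is handled by Bernoulli's inequality.\<close>

lemma jacobiP_dist_at_1_le:
  assumes "\<bar>u\<bar> \<le> 1" "n \<ge> 1"
  shows "\<bar>jacobiP a b n u - ((real n + a) gchoose n)\<bar> \<le> real n * jacobi_coeff_sum a b n * (1 - u)"
proof -
  define c where "c k = ((real n + a) gchoose (n - k)) * ((real n + b) gchoose k)" for k
  define g where "g v k = ((v - 1) / 2) ^ k * ((v + 1) / 2) ^ (n - k)" for v :: real and k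
  have P: "jacobiP a b n v = (\<Sum>k\<le>n. c k * g v k)" for v
    unfolding jacobiP_def c_def g_def by (simp add: mult.assoc)
  have D: "jacobiP a b n u - ((real n + a) gchoose n) = (\<Sum>k\<le>n. c k * (g u k - g 1 k))"
    using P[of u] P[of 1] jacobiP_at_1[of a b n] by (simp add: sum_subtractf right_diff_distrib)
  have gb: "\<bar>g u k - g 1 k\<bar> \<le> real n * (1 - u)" for k
  proof (cases "k = 0")
    case True
    have "-1 \<le> (u + 1) / 2 - 1" using assms by auto
    from Bernoulli_inequality[OF this, of n]
    have "1 - real n * (1 - u) / 2 \<le> ((u + 1) / 2) ^ n"
      by (simp add: field_simps)
    moreover have "((u + 1) / 2) ^ n \<le> 1" using assms by (intro power_le_one) auto
    moreover have "0 \<le> real n * (1 - u)" using assms by auto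
    ultimately show ?thesis using True by (simp add: g_def abs_le_iff)
  next
    case False
    have X: "\<bar>(u - 1) / 2\<bar> \<le> 1" and Y: "\<bar>(u + 1) / 2\<bar> \<le> 1" using assms by auto
    have "\<bar>((u - 1) / 2) ^ k\<bar> = \<bar>(u - 1) / 2\<bar> * \<bar>(u - 1) / 2\<bar> ^ (k - 1)"
      using False by (metis power_abs Suc_pred' neq0_conv power_Suc)
    also have "\<dots> \<le> \<bar>(u - 1) / 2\<bar> * 1" using X by (intro mult_left_mono power_le_one) auto
    finally have 1: "\<bar>((u - 1) / 2) ^ k\<bar> \<le> (1 - u) / 2" using assms by auto
    have 2: "\<bar>((u + 1) / 2) ^ (n - k)\<bar> \<le> 1" using Y by (simp add: power_abs power_le_one)
    have "\<bar>g u k\<bar> \<le> (1 - u) / 2 * 1" unfolding g_def abs_mult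
      using assms by (intro mult_mono 1 2) auto
    moreover have "g 1 k = 0" using False by (simp add: g_def)
    moreover have "1 * (1 - u) \<le> real n * (1 - u)"
      using assms by (intro mult_right_mono) auto
    ultimately show ?thesis using assms by simp
  qed
  have "\<bar>\<Sum>k\<le>n. c k * (g u k - g 1 k)\<bar> \<le> (\<Sum>k\<le>n. \<bar>c k\<bar> * (real n * (1 - u)))"
    by (rule order_trans[OF sum_abs], rule sum_mono) (auto simp: abs_mult intro: mult_left_mono gb)
  also have "\<dots> = jacobi_coeff_sum a b n * (real n * (1 - u))"
    by (simp add: jacobi_coeff_sum_def c_def sum_distrib_right abs_mult)
  finally show ?thesis using D by (simp add: mult_ac)
qed

lemma abs_gchoose_le_power: "\<bar>(r::real) gchoose j\<bar> \<le> (\<bar>r\<bar> + real j) ^ j"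
proof -
  have "\<bar>r gchoose j\<bar> = (\<Prod>i=0..<j. \<bar>r - of_nat i\<bar>) / fact j"
    by (simp add: gbinomial_prod_rev abs_prod)
  also have "\<dots> \<le> (\<Prod>i=0..<j. \<bar>r - of_nat i\<bar>)"
    using prod_nonneg[of "{0..<j}" "\<lambda>i. \<bar>r - of_nat i\<bar>"]
    by (simp add: divide_le_eq mult_le_cancel_left1)
  also have "\<dots> \<le> (\<Prod>i=0..<j. \<bar>r\<bar> + real j)"
    by (intro prod_mono) auto
  finally show ?thesis by simp
qed

lemma gchoose_diag_ge:
  assumes "a > -1"
  shows "min (a + 1) 1 ^ n / fact n \<le> (real n + a) gchoose n"
proof -
  have "(\<Prod>i=0..<n. min (a + 1) 1) \<le> (\<Prod>i=0..<n. a + 1 + real i)"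
    using assms by (intro prod_mono) auto
  then have "min (a + 1) 1 ^ n \<le> pochhammer (a + 1) n"
    by (simp add: pochhammer_prod)
  then show ?thesis
    by (simp add: gbinomial_pochhammer' add_ac divide_right_mono)
qed

lemma jacobi_coeff_sum_le_power:
  "jacobi_coeff_sum a b n \<le> (2 * real n + (\<bar>a\<bar> + \<bar>b\<bar> + 2)) ^ (2 * n + 1)"
proof -
  define R where "R = 2 * real n + (\<bar>a\<bar> + \<bar>b\<bar> + 2)"
  have R1: "1 \<le> R" unfolding R_def by auto
  have le_R: "\<bar>(real n + c) gchoose j\<bar> \<le> R ^ n" if "j \<le> n" "\<bar>c\<bar> \<le> \<bar>a\<bar> + \<bar>b\<bar>" for c j
  proof -
    have "\<bar>(real n + c) gchoose j\<bar> \<le> (\<bar>real n + c\<bar> + real j) ^ j"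
      by (rule abs_gchoose_le_power)
    also have "\<dots> \<le> R ^ j"
      using that by (intro power_mono) (auto simp: R_def)
    also have "\<dots> \<le> R ^ n" using R1 that by (intro power_increasing) auto
    finally show ?thesis .
  qed
  have "jacobi_coeff_sum a b n \<le> (\<Sum>k\<le>n. R ^ n * R ^ n)"
    unfolding jacobi_coeff_sum_def using R1 by (intro sum_mono mult_mono le_R) auto
  also have "\<dots> = (real n + 1) * R ^ (2 * n)" by (simp add: power_add[symmetric] mult_2)
  also have "\<dots> \<le> R * R ^ (2 * n)"
    by (intro mult_right_mono) (auto simp: R_def)
  finally show ?thesis unfolding R_def by simp
qed

lemma cos_ge_1_minus_sq_half: "1 - x\<^sup>2 / 2 \<le> cos (x::real)"
proof -
  have "cos x = 1 - 2 * sin (x/2) ^ 2" using cos_double_sin[of "x/2"] by simp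
  moreover have "sin (x/2) ^ 2 \<le> (x/2) ^ 2"
    using abs_sin_x_le_abs_x[of "x/2"] by (metis abs_le_square_iff)
  ultimately show ?thesis by (simp add: power_divide)
qed

lemma x_cos_le_sin:
  assumes "0 \<le> z" "z \<le> pi/2"
  shows "z * cos z \<le> sin z"
proof -
  have "(\<lambda>x. sin x - x * cos x) 0 \<le> (\<lambda>x. sin x - x * cos x) z"
  proof (rule DERIV_nonneg_imp_nondecreasing[OF assms(1)])
    fix x assume x: "0 \<le> x" "x \<le> z"
    have "DERIV (\<lambda>x. sin x - x * cos x) x :> x * sin x"
      by (rule derivative_eq_intros refl | simp)+
    moreover have "0 \<le> sin x" using x assms by (intro sin_ge_zero) auto
    ultimately show "\<exists>y. DERIV (\<lambda>x. sin x - x * cos x) x :> y \<and> 0 \<le> y"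
      using x by auto
  qed
  then show ?thesis by simp
qed

lemma sin_ge_div_pi:
  assumes "0 \<le> z" "z \<le> pi/2"
  shows "z / pi \<le> sin z"
proof (cases "z \<le> 1")
  case True
  have "z * (1 - z\<^sup>2/2) \<le> z * cos z"
    using assms cos_ge_1_minus_sq_half[of z] by (intro mult_left_mono) auto
  moreover have "z / 2 \<le> z * (1 - z\<^sup>2/2)"
  proof -
    have "z\<^sup>2 \<le> 1" using True assms by (simp add: power_le_one)
    then show ?thesis using assms mult_left_mono[of "1/2" "1 - z\<^sup>2/2" z] by simp
  qed
  moreover have "z / pi \<le> z / 2" using assms pi_gt3 by (intro divide_left_mono) auto
  ultimately show ?thesis using x_cos_le_sin[OF assms] by linarith
next
  case False
  have "1 * cos (1::real) \<le> sin 1" using x_cos_le_sin[of 1] pi_gt3 by simp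
  moreover have "1 - 1/2 \<le> cos (1::real)" using cos_ge_1_minus_sq_half[of 1] by simp
  moreover have "sin 1 \<le> sin z" using False assms pi_gt3 by (intro sin_monotone_2pi_le) auto
  moreover have "z / pi \<le> 1/2" using assms pi_gt3 by (simp add: divide_le_eq)
  ultimately show ?thesis by linarith
qed

lemma powr_abs_le_powr:
  fixes l v p :: real
  assumes "0 < l" "l \<le> v" "v \<le> 1"
  shows "l powr \<bar>p\<bar> \<le> v powr p"
proof (cases "0 \<le> p")
  case True
  then show ?thesis using assms by (simp add: powr_mono2)
next
  case False
  have "l powr \<bar>p\<bar> \<le> 1" using assms by (intro powr_le1) auto
  also have "1 \<le> v powr p"
    using powr_mono2'[of p v 1] False assms by simp
  finally show ?thesis .
qed

lemma powr_le_powr_min_0: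
  fixes l v p :: real
  assumes "0 < l" "l \<le> v" "v \<le> 1"
  shows "v powr p \<le> l powr (min p 0)"
  using assms by (cases "0 \<le> p") (simp_all add: powr_le1 powr_mono2')

lemma powr_le_of_comparable:
  fixes u v K e :: real
  assumes "0 < u" "u / K \<le> v" "v \<le> K * u" "1 \<le> K"
  shows "v powr e \<le> K powr \<bar>e\<bar> * u powr e"
proof -
  have v: "0 < v" using assms by (smt (verit) divide_pos_pos)
  have r: "1 / K \<le> v / u" "v / u \<le> K" using assms by (auto simp: field_simps)
  have "(v / u) powr e \<le> K powr \<bar>e\<bar>"
  proof (cases "0 \<le> e")
    case True
    then show ?thesis using r v assms by (simp add: powr_mono2)
  next
    case False
    have "(v / u) powr e \<le> (1 / K) powr e" using False r v assms by (intro powr_mono2') auto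
    also have "\<dots> = K powr \<bar>e\<bar>" using False assms by (simp add: powr_def ln_div)
    finally show ?thesis .
  qed
  moreover have "v powr e = (v / u) powr e * u powr e" using assms v by (simp add: powr_divide)
  ultimately show ?thesis by (simp add: mult_right_mono)
qed

section \<open>The weight and the normalising constants\<close>

lemma integrable_powr_on_0_pi:
  assumes "p > -1"
  shows "integrable lborel (\<lambda>x::real. indicator {0<..<pi} x *\<^sub>R x powr p)"
proof -
  have "(\<lambda>x::real. x powr p) integrable_on {0<..pi}"
    using integrable_on_powr_from_0'[OF assms, of pi] by simp
  then have "(\<lambda>x::real. x powr p) absolutely_integrable_on {0<..pi}"
    by (rule nonnegative_absolutely_integrable_1) auto
  then have "set_integrable lebesgue {0<..<pi} (\<lambda>x::real. x powr p)"
    by (rule set_integrable_subset) auto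
  then have "integrable (completion lborel) (\<lambda>x::real. indicator {0<..<pi} x *\<^sub>R x powr p)"
    unfolding set_integrable_def by simp
  moreover have "(\<lambda>x::real. indicator {0<..<pi} x *\<^sub>R x powr p) \<in> borel_measurable lborel"
    by measurable
  ultimately show ?thesis by (simp add: integrable_completion)
qed

lemma integrable_powr_pi_minus_on_0_pi:
  assumes "p > -1"
  shows "integrable lborel (\<lambda>x::real. indicator {0<..<pi} x *\<^sub>R (pi - x) powr p)"
proof -
  have "integrable lborel (\<lambda>x::real. indicator {0<..<pi} (pi + (-1) * x) *\<^sub>R (pi + (-1) * x) powr p)"
    using lborel_integrable_real_affine[OF integrable_powr_on_0_pi[OF assms], of "-1" pi] by simp
  moreover have "indicator {0<..<pi} (pi + (-1) * x) = (indicator {0<..<pi} x :: real)" for x :: real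
    by (auto simp: indicator_def)
  ultimately show ?thesis by simp
qed

lemma jacobi_weight_le:
  fixes a b x :: real
  assumes x: "0 < x" "x < pi"
  defines "p \<equiv> min (2 * a + 1) 0" and "q \<equiv> min (2 * b + 1) 0"
  shows "jacobi_weight a b x
      \<le> (1/4) powr q * (x / (2*pi)) powr p + (1/4) powr p * ((pi - x) / (2*pi)) powr q"
proof -
  define X where "X = (x / (2*pi)) powr p"
  define Y where "Y = ((pi - x) / (2*pi)) powr q"
  have Xn: "0 \<le> X" and Yn: "0 \<le> Y" by (auto simp: X_def Y_def)
  have s: "x / (2*pi) \<le> sin (x/2)" using sin_ge_div_pi[of "x/2"] x by simp
  have "cos (x/2) = sin ((pi - x)/2)" by (simp add: cos_sin_eq diff_divide_distrib)
  then have c: "(pi - x) / (2*pi) \<le> cos (x/2)" using sin_ge_div_pi[of "(pi - x)/2"] x by simp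
  have "sin (x/2) powr (2*a+1) \<le> X"
    unfolding X_def p_def by (rule powr_le_powr_min_0) (use x s in auto)
  moreover have "cos (x/2) powr (2*b+1) \<le> Y"
    unfolding Y_def q_def by (rule powr_le_powr_min_0) (use x c in auto)
  ultimately have "jacobi_weight a b x \<le> X * Y"
    unfolding jacobi_weight_def by (intro mult_mono) (auto simp: X_def)
  also have "X * Y \<le> (1/4) powr q * X + (1/4) powr p * Y"
  proof (cases "x \<le> pi/2")
    case True
    have "Y \<le> (1/4) powr min q 0"
      unfolding Y_def by (rule powr_le_powr_min_0) (use x True in auto)
    then show ?thesis using Xn Yn by (simp add: q_def mult_left_mono mult.commute add_increasing2)
  next
    case False
    have "X \<le> (1/4) powr min p 0"
      unfolding X_def by (rule powr_le_powr_min_0) (use x False in auto)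
    then show ?thesis using Xn Yn by (simp add: p_def mult_right_mono add_increasing)
  qed
  finally show ?thesis by (simp add: X_def Y_def)
qed

lemma jacobi_weight_integrable:
  assumes a: "a > -1" and b: "b > -1"
  shows "set_integrable lborel {0<..<pi} (jacobi_weight a b)"
proof -
  define p where "p = min (2 * a + 1) 0"
  define q where "q = min (2 * b + 1) 0"
  have p: "p > -1" and q: "q > -1" using a b by (auto simp: p_def q_def)
  define h where "h x = (1/4) powr q * (2*pi) powr (-p) * x powr p
      + (1/4) powr p * (2*pi) powr (-q) * (pi - x) powr q" for x :: real
  have "integrable lborel (\<lambda>x. (1/4) powr q * (2*pi) powr (-p) * (indicator {0<..<pi} x *\<^sub>R x powr p)
      + (1/4) powr p * (2*pi) powr (-q) * (indicator {0<..<pi} x *\<^sub>R (pi - x) powr q))"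
    using integrable_powr_on_0_pi[OF p] integrable_powr_pi_minus_on_0_pi[OF q] by simp
  then have majorant: "set_integrable lborel {0<..<pi} h"
    unfolding set_integrable_def h_def by (simp add: algebra_simps)
  have "set_borel_measurable lborel {0<..<pi} (jacobi_weight a b)"
    unfolding set_borel_measurable_def jacobi_weight_def by measurable
  moreover have "norm (jacobi_weight a b x) \<le> norm (h x)" if "x \<in> {0<..<pi}" for x
  proof -
    from that have x: "0 < x" "x < pi" by auto
    have "jacobi_weight a b x \<le> h x"
      using jacobi_weight_le[OF x, of a b, folded p_def q_def] x
      by (simp add: h_def powr_divide powr_minus_divide)
    then show ?thesis by (simp add: jacobi_weight_def)
  qed
  ultimately show ?thesis
    by (intro set_integrable_bound[OF majorant]) auto
qed

definition jacobi_norm_sq :: "real \<Rightarrow> real \<Rightarrow> nat \<Rightarrow> real" where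
  "jacobi_norm_sq a b n = (LBINT \<theta>:{0<..<pi}. (jacobiP a b n (cos \<theta>))\<^sup>2 * jacobi_weight a b \<theta>)"

lemma jacobi_c_sq_eq: "jacobi_c a b n ^ 2 = 1 / jacobi_norm_sq a b n"
proof -
  have "0 \<le> jacobi_norm_sq a b n"
    unfolding jacobi_norm_sq_def set_lebesgue_integral_def
    by (rule integral_nonneg_AE, rule AE_I2) (auto simp: jacobi_weight_def indicator_def)
  then show ?thesis
    unfolding jacobi_c_def jacobi_norm_sq_def[symmetric] by (simp add: power_divide)
qed

lemma jacobi_integrand_integrable:
  assumes "a > -1" "b > -1"
  shows "set_integrable lborel {0<..<pi} (\<lambda>\<theta>. (jacobiP a b n (cos \<theta>))\<^sup>2 * jacobi_weight a b \<theta>)"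
proof -
  have majorant: "set_integrable lborel {0<..<pi} (\<lambda>\<theta>. jacobi_coeff_sum a b n ^ 2 * jacobi_weight a b \<theta>)"
    using jacobi_weight_integrable[OF assms] by (rule set_integrable_mult_right)
  have "set_borel_measurable lborel {0<..<pi} (\<lambda>\<theta>. (jacobiP a b n (cos \<theta>))\<^sup>2 * jacobi_weight a b \<theta>)"
    unfolding set_borel_measurable_def jacobiP_def jacobi_weight_def by measurable
  moreover have "norm ((jacobiP a b n (cos \<theta>))\<^sup>2 * jacobi_weight a b \<theta>)
      \<le> norm (jacobi_coeff_sum a b n ^ 2 * jacobi_weight a b \<theta>)" for \<theta>
  proof -
    have "\<bar>jacobiP a b n (cos \<theta>)\<bar> \<le> \<bar>jacobi_coeff_sum a b n\<bar>"
      using abs_jacobiP_le_coeff_sum[of "cos \<theta>" a b n] jacobi_coeff_sum_nonneg[of a b n] by simp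
    then have "(jacobiP a b n (cos \<theta>))\<^sup>2 \<le> jacobi_coeff_sum a b n ^ 2"
      by (simp add: abs_le_square_iff)
    moreover have "0 \<le> jacobi_weight a b \<theta>" by (simp add: jacobi_weight_def)
    ultimately show ?thesis by (simp add: abs_mult mult_right_mono)
  qed
  ultimately show ?thesis
    by (intro set_integrable_bound[OF majorant]) auto
qed

lemma jacobi_weight_ge_near_0:
  assumes "0 < \<tau>" "\<tau> \<le> 1" "\<tau>/2 \<le> \<theta>" "\<theta> \<le> \<tau>"
  shows "(\<tau> / (4*pi)) powr \<bar>2*a+1\<bar> * (1/2) powr \<bar>2*b+1\<bar> \<le> jacobi_weight a b \<theta>"
proof -
  have "(\<theta>/2) / pi \<le> sin (\<theta>/2)" using assms pi_gt3 by (intro sin_ge_div_pi) auto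
  moreover have "\<tau> / (4*pi) \<le> (\<theta>/2) / pi" using assms pi_gt3 by (simp add: field_simps)
  ultimately have "(\<tau> / (4*pi)) powr \<bar>2*a+1\<bar> \<le> sin (\<theta>/2) powr (2*a+1)"
    using assms by (intro powr_abs_le_powr) auto
  moreover have "1/2 \<le> cos (\<theta>/2)"
  proof -
    have "(\<theta>/2)\<^sup>2 \<le> 1" using assms by (simp add: power_le_one)
    then show ?thesis using cos_ge_1_minus_sq_half[of "\<theta>/2"] by linarith
  qed
  then have "(1/2) powr \<bar>2*b+1\<bar> \<le> cos (\<theta>/2) powr (2*b+1)"
    by (intro powr_abs_le_powr) auto
  ultimately show ?thesis
    unfolding jacobi_weight_def by (intro mult_mono) auto
qed

lemma jacobi_norm_sq_ge:
  assumes "a > -1" "b > -1" "0 < \<tau>" "\<tau> \<le> 1"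
    and lower: "\<And>\<theta>. \<tau>/2 \<le> \<theta> \<Longrightarrow> \<theta> \<le> \<tau> \<Longrightarrow> m \<le> (jacobiP a b n (cos \<theta>))\<^sup>2 * jacobi_weight a b \<theta>"
  shows "m * (\<tau>/2) \<le> jacobi_norm_sq a b n"
proof -
  let ?I = "{\<tau>/2..\<tau>}"
  have "?I \<subseteq> {0<..<pi}" using assms pi_gt3 by auto
  then have ind: "indicator {0<..<pi} \<theta> *\<^sub>R (m * indicator ?I \<theta>) = indicator ?I \<theta> *\<^sub>R m" for \<theta> :: real
    by (auto simp: indicator_def)
  have "set_integrable lborel {0<..<pi} (\<lambda>\<theta>. m * indicator ?I \<theta>)"
    unfolding set_integrable_def ind by (simp add: integrable_indicator_iff emeasure_lborel_Icc_eq)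
  moreover have "m * indicator ?I \<theta> \<le> (jacobiP a b n (cos \<theta>))\<^sup>2 * jacobi_weight a b \<theta>" for \<theta>
    using lower[of \<theta>] by (auto simp: indicator_def jacobi_weight_def)
  ultimately have "(LBINT \<theta>:{0<..<pi}. m * indicator ?I \<theta>) \<le> jacobi_norm_sq a b n"
    unfolding jacobi_norm_sq_def using jacobi_integrand_integrable[OF assms(1,2)]
    by (intro set_integral_mono) auto
  moreover have "(LBINT \<theta>:{0<..<pi}. m * indicator ?I \<theta>) = (LBINT \<theta>:?I. m)"
    unfolding set_lebesgue_integral_def ind ..
  moreover have "(LBINT \<theta>:?I. m) = m * (\<tau>/2)"
    using assms(3) by (simp add: set_lebesgue_integral_def)
  ultimately show ?thesis by linarith
qed

lemma jacobi_c_0_pos: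
  assumes "a > -1" "b > -1"
  shows "0 < jacobi_c a b 0 ^ 2"
proof -
  define m where "m = (1 / (4*pi)) powr \<bar>2*a+1\<bar> * (1/2) powr \<bar>2*b+1\<bar>"
  have "m * (1/2) \<le> jacobi_norm_sq a b 0"
    using jacobi_weight_ge_near_0[of 1] unfolding m_def
    by (intro jacobi_norm_sq_ge[OF assms]) auto
  moreover have "0 < m" by (simp add: m_def)
  ultimately show ?thesis by (simp add: jacobi_c_sq_eq)
qed

lemma gchoose_diag_div_coeff_sum_bounds:
  assumes "n \<ge> 1" "0 < (real n + a) gchoose n"
  shows "0 < ((real n + a) gchoose n) / (real n * jacobi_coeff_sum a b n)"
    and "((real n + a) gchoose n) / (real n * jacobi_coeff_sum a b n) \<le> 1"
proof -
  have pB: "(real n + a) gchoose n \<le> jacobi_coeff_sum a b n"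
    using abs_gchoose_diag_le_coeff_sum[of n a b] by simp
  then have Bp: "0 < jacobi_coeff_sum a b n" using assms(2) by linarith
  then have "jacobi_coeff_sum a b n \<le> real n * jacobi_coeff_sum a b n" using assms(1) by simp
  with pB have "(real n + a) gchoose n \<le> real n * jacobi_coeff_sum a b n" by linarith
  then show "((real n + a) gchoose n) / (real n * jacobi_coeff_sum a b n) \<le> 1"
    using Bp assms(1) by (simp add: divide_le_eq)
  show "0 < ((real n + a) gchoose n) / (real n * jacobi_coeff_sum a b n)"
    using Bp assms by simp
qed

lemma jacobiP_cos_ge_half_at_1:
  assumes n: "n \<ge> 1" and pn: "0 < (real n + a) gchoose n"
    and \<theta>: "0 \<le> \<theta>" "\<theta> \<le> ((real n + a) gchoose n) / (real n * jacobi_coeff_sum a b n)"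
  shows "((real n + a) gchoose n) / 2 \<le> jacobiP a b n (cos \<theta>)"
proof -
  define pn where "pn = (real n + a) gchoose n"
  define \<tau> where "\<tau> = pn / (real n * jacobi_coeff_sum a b n)"
  note \<tau> = gchoose_diag_div_coeff_sum_bounds[OF n pn, of b, folded pn_def, folded \<tau>_def]
  have nB: "0 < real n * jacobi_coeff_sum a b n"
    using abs_gchoose_diag_le_coeff_sum[of n a b] pn n by simp
  have "1 - cos \<theta> \<le> \<theta>\<^sup>2 / 2" using cos_ge_1_minus_sq_half[of \<theta>] by simp
  also have "\<dots> \<le> \<tau>\<^sup>2 / 2" using \<theta> by (simp add: \<tau>_def pn_def power_mono)
  also have "\<dots> \<le> \<tau> / 2" using \<tau> by (simp add: power2_eq_square mult_le_cancel_left1)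
  finally have "real n * jacobi_coeff_sum a b n * (1 - cos \<theta>) \<le> real n * jacobi_coeff_sum a b n * (\<tau> / 2)"
    using nB by (intro mult_left_mono) auto
  also have "\<dots> = pn / 2"
  proof -
    have "n \<noteq> 0" "jacobi_coeff_sum a b n \<noteq> 0" using nB n by auto
    then show ?thesis unfolding \<tau>_def by simp
  qed
  finally have "\<bar>jacobiP a b n (cos \<theta>) - pn\<bar> \<le> pn / 2"
    using jacobiP_dist_at_1_le[of "cos \<theta>" n a b] n by (simp add: pn_def)
  then show ?thesis unfolding pn_def abs_le_iff by linarith
qed

lemma jacobi_norm_sq_ge_gchoose_diag:
  assumes a: "a > -1" and b: "b > -1" and n: "n \<ge> 1" and pn: "0 < (real n + a) gchoose n"
  defines "pn \<equiv> (real n + a) gchoose n"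
  defines "\<tau> \<equiv> pn / (real n * jacobi_coeff_sum a b n)"
  shows "(pn\<^sup>2 / 4) * ((\<tau> / (4*pi)) powr \<bar>2*a+1\<bar> * (1/2) powr \<bar>2*b+1\<bar>) * (\<tau>/2)
      \<le> jacobi_norm_sq a b n"
proof (rule jacobi_norm_sq_ge[OF a b])
  note \<tau> = gchoose_diag_div_coeff_sum_bounds[OF n pn, of b, folded pn_def, folded \<tau>_def]
  show "0 < \<tau>" "\<tau> \<le> 1" by (fact \<tau>)+
  fix \<theta> assume \<theta>: "\<tau>/2 \<le> \<theta>" "\<theta> \<le> \<tau>"
  have "pn / 2 \<le> jacobiP a b n (cos \<theta>)"
    using jacobiP_cos_ge_half_at_1[OF n pn, of \<theta> b] \<theta> \<tau> by (simp add: pn_def \<tau>_def)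
  then have "pn\<^sup>2 / 4 \<le> (jacobiP a b n (cos \<theta>))\<^sup>2"
    using pn power_mono[of "pn/2" _ 2] by (simp add: pn_def power_divide)
  moreover have "(\<tau> / (4*pi)) powr \<bar>2*a+1\<bar> * (1/2) powr \<bar>2*b+1\<bar> \<le> jacobi_weight a b \<theta>"
    using \<tau> \<theta> by (rule jacobi_weight_ge_near_0)
  ultimately show "(pn\<^sup>2 / 4) * ((\<tau> / (4*pi)) powr \<bar>2*a+1\<bar> * (1/2) powr \<bar>2*b+1\<bar>)
      \<le> (jacobiP a b n (cos \<theta>))\<^sup>2 * jacobi_weight a b \<theta>"
    by (intro mult_mono) auto
qed

text \<open>A single scale \<open>Z\<^sub>n = O(n)\<close> that dominates all quantities entering the bound on \<open>c\<^sub>n\<close>.\<close>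

definition jacobi_scale :: "real \<Rightarrow> real \<Rightarrow> nat \<Rightarrow> real" where
  "jacobi_scale a b n = 16 * pi / min (a + 1) 1 * (2 * real n + (\<bar>a\<bar> + \<bar>b\<bar> + 2))"

lemma jacobi_scale_ge:
  fixes a b :: real and n :: nat
  assumes "a > -1"
  shows "2 * real n + (\<bar>a\<bar> + \<bar>b\<bar> + 2) \<le> jacobi_scale a b n"
    and "1 / min (a + 1) 1 \<le> jacobi_scale a b n"
    and "16 * pi \<le> jacobi_scale a b n"
proof -
  define \<mu> where "\<mu> = min (a + 1) 1"
  define R where "R = 2 * real n + (\<bar>a\<bar> + \<bar>b\<bar> + 2)"
  have \<mu>: "0 < \<mu>" "\<mu> \<le> 1" using assms by (auto simp: \<mu>_def)
  have R: "1 \<le> R" by (simp add: R_def)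
  have Z: "jacobi_scale a b n = 16 * pi / \<mu> * R" by (simp add: jacobi_scale_def \<mu>_def R_def)
  have c: "16 * pi \<le> 16 * pi / \<mu>" "1 / \<mu> \<le> 16 * pi / \<mu>"
    using \<mu> pi_gt3 by (auto simp: field_simps)
  have "16 * pi / \<mu> * 1 \<le> jacobi_scale a b n"
    unfolding Z using R c pi_gt3 by (intro mult_left_mono) auto
  moreover have "1 * R \<le> jacobi_scale a b n"
    unfolding Z using R c pi_gt3 by (intro mult_right_mono) auto
  ultimately show "2 * real n + (\<bar>a\<bar> + \<bar>b\<bar> + 2) \<le> jacobi_scale a b n"
    and "1 / min (a + 1) 1 \<le> jacobi_scale a b n" and "16 * pi \<le> jacobi_scale a b n"
    using c by (simp_all add: R_def \<mu>_def)
qed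

lemma jacobi_scale_pos:
  fixes a b :: real and n :: nat
  shows "a > -1 \<Longrightarrow> 0 < jacobi_scale a b n"
  using jacobi_scale_ge(3)[of a b n] pi_gt_zero by linarith

lemma jacobi_coeff_sum_le_scale:
  fixes a b :: real and n :: nat
  assumes "a > -1"
  shows "jacobi_coeff_sum a b n \<le> jacobi_scale a b n powr (2 * real n + 1)"
proof -
  have "jacobi_coeff_sum a b n \<le> (2 * real n + (\<bar>a\<bar> + \<bar>b\<bar> + 2)) ^ (2 * n + 1)"
    by (rule jacobi_coeff_sum_le_power)
  also have "\<dots> \<le> jacobi_scale a b n ^ (2 * n + 1)"
    using jacobi_scale_ge(1)[OF assms] by (intro power_mono) auto
  also have "\<dots> = jacobi_scale a b n powr (2 * real n + 1)"
    using powr_realpow[OF jacobi_scale_pos[OF assms, of b n], of "2 * n + 1"] by (simp add: add.commute)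
  finally show ?thesis .
qed

lemma gchoose_diag_ge_scale:
  fixes a b :: real and n :: nat
  assumes "a > -1"
  shows "jacobi_scale a b n powr (- (2 * real n)) \<le> (real n + a) gchoose n"
proof -
  define \<mu> where "\<mu> = min (a + 1) 1"
  define R where "R = 2 * real n + (\<bar>a\<bar> + \<bar>b\<bar> + 2)"
  define Z where "Z = jacobi_scale a b n"
  have \<mu>: "0 < \<mu>" using assms by (simp add: \<mu>_def)
  have R: "1 \<le> R" "real n \<le> R" by (simp_all add: R_def)
  have Zp: "0 < Z" unfolding Z_def by (rule jacobi_scale_pos[OF assms])
  have "R / \<mu> = R * (1 / \<mu>)" by simp
  also have "\<dots> \<le> Z * Z"
    using jacobi_scale_ge(1,2)[OF assms, where b = b and n = n] R \<mu> unfolding Z_def R_def \<mu>_def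
    by (intro mult_mono) auto
  finally have "(R / \<mu>) ^ n \<le> (Z * Z) ^ n" using R \<mu> by (intro power_mono) auto
  then have "1 / (Z * Z) ^ n \<le> 1 / (R / \<mu>) ^ n"
    using R \<mu> Zp by (intro divide_left_mono) auto
  moreover have "(Z * Z) ^ n = Z powr (2 * real n)"
    using powr_realpow[OF Zp, of "2 * n"] by (simp add: power_mult power2_eq_square[symmetric])
  moreover have "fact n \<le> R ^ n"
    using fact_le_power[of n, where 'a = real] power_mono[OF R(2), of n] by simp
  then have "1 / (R / \<mu>) ^ n \<le> \<mu> ^ n / fact n"
    using R \<mu> by (simp add: power_divide divide_left_mono)
  moreover have "\<mu> ^ n / fact n \<le> (real n + a) gchoose n"
    unfolding \<mu>_def by (rule gchoose_diag_ge[OF assms])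
  ultimately show ?thesis by (simp add: Z_def powr_minus_divide)
qed

lemma gchoose_diag_pos:
  fixes a :: real and n :: nat
  shows "a > -1 \<Longrightarrow> 0 < (real n + a) gchoose n"
  using gchoose_diag_ge_scale[of a b n] jacobi_scale_pos[of a b n]
  by (smt (verit) powr_gt_zero)

lemma gchoose_diag_div_coeff_sum_ge_scale:
  fixes a b :: real
  assumes "a > -1" "n \<ge> 1"
  defines "Z \<equiv> jacobi_scale a b n"
  shows "Z powr (- (4 * real n + 2)) \<le> ((real n + a) gchoose n) / (real n * jacobi_coeff_sum a b n)"
proof -
  have Zp: "0 < Z" unfolding Z_def by (rule jacobi_scale_pos[OF assms(1)])
  have "real n * jacobi_coeff_sum a b n \<le> Z * Z powr (2 * real n + 1)"
    using jacobi_scale_ge(1)[OF assms(1), where b = b and n = n] jacobi_coeff_sum_le_scale[OF assms(1), of b n]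
      jacobi_coeff_sum_nonneg[of a b n] unfolding Z_def by (intro mult_mono) auto
  also have "\<dots> = Z powr (2 * real n + 2)" using Zp by (simp add: powr_mult_base add.commute)
  finally have denom: "real n * jacobi_coeff_sum a b n \<le> Z powr (2 * real n + 2)" .
  have "0 < ((real n + a) gchoose n) / (real n * jacobi_coeff_sum a b n)"
    using gchoose_diag_div_coeff_sum_bounds(1)[OF assms(2) gchoose_diag_pos[OF assms(1)]] .
  then have "0 < real n * jacobi_coeff_sum a b n"
    using gchoose_diag_pos[OF assms(1), of n] by (simp add: zero_less_divide_iff)
  then have "Z powr (- (2 * real n)) / Z powr (2 * real n + 2)
      \<le> ((real n + a) gchoose n) / (real n * jacobi_coeff_sum a b n)"
    using denom gchoose_diag_ge_scale[OF assms(1), of b n] gchoose_diag_pos[OF assms(1), of n]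
    unfolding Z_def by (intro frac_le) auto
  moreover have "Z powr (- (4 * real n + 2)) = Z powr (- (2 * real n)) / Z powr (2 * real n + 2)"
    by (simp add: powr_diff[symmetric])
  ultimately show ?thesis by simp
qed

lemma powr_minus_add_1_le:
  fixes z e u c :: real
  assumes "0 < c" "c \<le> z" "z powr (- e) \<le> u"
  shows "z powr (- (e + 1)) \<le> u / c"
proof -
  have "z powr (- (e + 1)) = z powr (- e) / z"
    using assms(1,2) powr_diff[of z "- e" 1] by simp
  also have "\<dots> \<le> u / c"
  proof (rule frac_le)
    show "0 \<le> u" using assms(3) powr_ge_zero[of z "- e"] by linarith
  qed (use assms in auto)
  finally show ?thesis .
qed

lemma jacobi_norm_sq_ge_scale:
  assumes a: "a > -1" and b: "b > -1" and n: "n \<ge> 1"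
  defines "Z \<equiv> jacobi_scale a b n" and "P \<equiv> \<bar>2*a+1\<bar>" and "Q \<equiv> \<bar>2*b+1\<bar>"
  shows "Z powr (- (8 * real n + 4 + (4 * real n + 3) * P + Q)) \<le> jacobi_norm_sq a b n"
proof -
  define pn where "pn = (real n + a) gchoose n"
  define \<tau> where "\<tau> = pn / (real n * jacobi_coeff_sum a b n)"
  have Z16: "16 * pi \<le> Z" unfolding Z_def by (rule jacobi_scale_ge(3)[OF a])
  have "Z powr (- (2 * real n)) \<le> pn"
    unfolding Z_def pn_def by (rule gchoose_diag_ge_scale[OF a])
  then have "(Z powr (- (2 * real n)))\<^sup>2 \<le> pn\<^sup>2" by (intro power_mono) auto
  then have "Z powr (- (4 * real n)) \<le> pn\<^sup>2"
    by (simp add: power2_eq_square powr_add[symmetric])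
  then have pn: "Z powr (- (4 * real n + 1)) \<le> pn\<^sup>2 / 4"
    using Z16 pi_gt3 by (intro powr_minus_add_1_le) auto
  have "Z powr (- (4 * real n + 2)) \<le> \<tau>"
    unfolding Z_def \<tau>_def pn_def by (rule gchoose_diag_div_coeff_sum_ge_scale[OF a n])
  then have \<tau>_4pi: "Z powr (- (4 * real n + 2 + 1)) \<le> \<tau> / (4*pi)"
    and \<tau>_2: "Z powr (- (4 * real n + 2 + 1)) \<le> \<tau> / 2"
    using Z16 pi_gt3 by (intro powr_minus_add_1_le; simp)+
  have "(Z powr (- (4 * real n + 2 + 1))) powr P \<le> (\<tau> / (4*pi)) powr P"
    using \<tau>_4pi by (intro powr_mono2) (auto simp: P_def)
  then have weight_a: "Z powr (- ((4 * real n + 2 + 1) * P)) \<le> (\<tau> / (4*pi)) powr P"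
    unfolding powr_powr by (simp add: algebra_simps)
  have "(1/Z) powr Q \<le> (1/2) powr Q"
    using Z16 pi_gt3 by (intro powr_mono2) (auto simp: Q_def field_simps)
  then have weight_b: "Z powr (- Q) \<le> (1/2) powr Q"
    by (simp add: powr_minus_divide powr_divide)
  have "- (8 * real n + 4 + (4 * real n + 3) * P + Q)
      = - (4 * real n + 1) + (- ((4 * real n + 2 + 1) * P) + - Q) + - (4 * real n + 2 + 1)"
    by (simp add: algebra_simps)
  then have "Z powr (- (8 * real n + 4 + (4 * real n + 3) * P + Q))
      = Z powr (- (4 * real n + 1)) * (Z powr (- ((4 * real n + 2 + 1) * P)) * Z powr (- Q))
        * Z powr (- (4 * real n + 2 + 1))"
    by (simp only: powr_add)
  also have "\<dots> \<le> (pn\<^sup>2 / 4) * ((\<tau> / (4*pi)) powr P * (1/2) powr Q) * (\<tau> / 2)"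
    by (intro mult_mono pn \<tau>_2 weight_a weight_b) auto
  also have "\<dots> \<le> jacobi_norm_sq a b n"
    unfolding pn_def \<tau>_def P_def Q_def
    by (rule jacobi_norm_sq_ge_gchoose_diag[OF a b n gchoose_diag_pos[OF a]])
  finally show ?thesis .
qed

lemma jacobi_c_sq_coeff_sum_sq_le:
  assumes a: "a > -1" and b: "b > -1" and n: "n \<ge> 1"
  shows "jacobi_c a b n ^ 2 * jacobi_coeff_sum a b n ^ 2
      \<le> jacobi_scale a b n powr ((12 + 4 * \<bar>2*a+1\<bar>) * real n + (6 + 3 * \<bar>2*a+1\<bar> + \<bar>2*b+1\<bar>))"
proof -
  define Z where "Z = jacobi_scale a b n"
  define E where "E = 8 * real n + 4 + (4 * real n + 3) * \<bar>2*a+1\<bar> + \<bar>2*b+1\<bar>"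
  have Zp: "0 < Z" unfolding Z_def by (rule jacobi_scale_pos[OF a])
  have norm: "Z powr (- E) \<le> jacobi_norm_sq a b n"
    unfolding Z_def E_def by (rule jacobi_norm_sq_ge_scale[OF a b n])
  have "jacobi_c a b n ^ 2 = 1 / jacobi_norm_sq a b n" by (rule jacobi_c_sq_eq)
  also have "\<dots> \<le> 1 / Z powr (- E)"
  proof -
    have pos: "0 < Z powr (- E)" using Zp by simp
    then have "0 < jacobi_norm_sq a b n" using norm by linarith
    with pos have "0 < jacobi_norm_sq a b n * Z powr (- E)" by simp
    then show ?thesis by (rule divide_left_mono[OF norm zero_le_one])
  qed
  finally have c: "jacobi_c a b n ^ 2 \<le> Z powr E" by (simp add: powr_minus_divide)
  have "jacobi_coeff_sum a b n ^ 2 \<le> (Z powr (2 * real n + 1))\<^sup>2"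
    using jacobi_coeff_sum_le_scale[OF a] jacobi_coeff_sum_nonneg
    unfolding Z_def by (intro power_mono) auto
  also have "\<dots> = Z powr (4 * real n + 2)"
    by (simp add: power2_eq_square powr_add[symmetric])
  finally have "jacobi_c a b n ^ 2 * jacobi_coeff_sum a b n ^ 2 \<le> Z powr E * Z powr (4 * real n + 2)"
    using c by (intro mult_mono) auto
  also have "\<dots> = Z powr ((12 + 4 * \<bar>2*a+1\<bar>) * real n + (6 + 3 * \<bar>2*a+1\<bar> + \<bar>2*b+1\<bar>))"
    by (simp add: E_def powr_add[symmetric] algebra_simps)
  finally show ?thesis unfolding Z_def .
qed

section \<open>The tail of the kernel series\<close>

lemma exp_neg_quadratic_plus_nlogn_bigo:
  fixes c A s E F K :: real
  assumes "c > 0" "A > 0"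
  shows "(\<lambda>n::nat. exp (- c * real n * (real n + s) + (E * real n + F) * (K + ln (2 * real n + A))))
           \<in> O(\<lambda>n. (1/2) ^ n)"
  using assms by real_asymp

definition jacobi_heat_majorant :: "real \<Rightarrow> real \<Rightarrow> nat \<Rightarrow> real" where
  "jacobi_heat_majorant a b n =
     exp (- (pi\<^sup>2) * real n * (real n + (a + b + 1))) * (jacobi_c a b n ^ 2 * jacobi_coeff_sum a b n ^ 2)"

lemma jacobi_heat_majorant_nonneg: "0 \<le> jacobi_heat_majorant a b n"
  by (simp add: jacobi_heat_majorant_def)

lemma summable_jacobi_heat_majorant:
  assumes a: "a > -1" and b: "b > -1"
  shows "summable (jacobi_heat_majorant a b)"
proof -
  define P where "P = \<bar>2*a+1\<bar>"
  define Q where "Q = \<bar>2*b+1\<bar>"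
  define c0 where "c0 = 16 * pi / min (a+1) 1"
  define A where "A = \<bar>a\<bar> + \<bar>b\<bar> + 2"
  define G where "G n = exp (- (pi\<^sup>2) * real n * (real n + (a + b + 1))
      + ((12 + 4*P) * real n + (6 + 3*P + Q)) * (ln c0 + ln (2 * real n + A)))" for n :: nat
  have c0: "0 < c0" using a by (auto simp: c0_def)
  have A: "0 < A" by (simp add: A_def)
  have "G \<in> O(\<lambda>n. (1/2) ^ n)"
    unfolding G_def using A by (intro exp_neg_quadratic_plus_nlogn_bigo) auto
  then have "summable G"
    by (rule summable_comparison_test_bigo[rotated]) (simp add: summable_geometric)
  moreover have "norm (jacobi_heat_majorant a b n) \<le> G n" if "n \<ge> 1" for n
  proof -
    have Z: "jacobi_scale a b n = c0 * (2 * real n + A)"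
      by (simp add: jacobi_scale_def c0_def A_def)
    have "jacobi_c a b n ^ 2 * jacobi_coeff_sum a b n ^ 2
        \<le> jacobi_scale a b n powr ((12 + 4*P) * real n + (6 + 3*P + Q))"
      unfolding P_def Q_def by (rule jacobi_c_sq_coeff_sum_sq_le[OF a b that])
    also have "\<dots> = exp (((12 + 4*P) * real n + (6 + 3*P + Q)) * (ln c0 + ln (2 * real n + A)))"
      using c0 A by (simp add: Z powr_def ln_mult mult.commute)
    finally show ?thesis
      unfolding G_def exp_add jacobi_heat_majorant_def by (simp add: mult_left_mono)
  qed
  then have "\<forall>\<^sub>F n in sequentially. norm (jacobi_heat_majorant a b n) \<le> G n"
    unfolding eventually_sequentially by blast
  ultimately show ?thesis
    by (rule summable_comparison_test_ev[rotated])
qed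

lemma exp_heat_factor_le:
  fixes c t :: real
  assumes "c > -1" "1 \<le> t" "1 \<le> n"
  shows "exp (- t * pi\<^sup>2 * (real n * (real n + c)))
      \<le> exp (- ((t - 1) * (pi\<^sup>2 * (1 + c)))) * exp (- (pi\<^sup>2) * real n * (real n + c))"
proof -
  have "real n * (real n + c) - (1 + c) = (real n - 1) * (real n + 1 + c)"
    by (simp add: algebra_simps)
  moreover have "0 \<le> (real n - 1) * (real n + 1 + c)" using assms by simp
  ultimately have "1 + c \<le> real n * (real n + c)" by linarith
  then have "(t - 1) * (pi\<^sup>2 * (1 + c)) \<le> (t - 1) * (pi\<^sup>2 * (real n * (real n + c)))"
    using assms by (intro mult_left_mono) auto
  then show ?thesis
    unfolding exp_add[symmetric] by (simp add: algebra_simps)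
qed

lemma exp_decay_times_le_half:
  fixes M c d t :: real
  assumes "0 < c" "0 < d" "0 \<le> M" "1 + 2 * M / (c * d) \<le> t"
  shows "exp (- ((t - 1) * d)) * M \<le> c / 2"
proof -
  define z where "z = (t - 1) * d"
  have "0 < c * d" using assms by simp
  moreover have "2 * M / (c * d) \<le> t - 1" using assms(4) by linarith
  ultimately have "2 * M \<le> (t - 1) * (c * d)" by (simp add: pos_divide_le_eq)
  then have "2 * M \<le> c * z" by (simp add: z_def mult_ac)
  moreover have "1 + z \<le> exp z" by (rule exp_ge_add_one_self)
  ultimately have "2 * M \<le> c * exp z"
    using assms(1) by (smt (verit) mult_left_mono)
  then have "M / exp z \<le> c / 2" by (simp add: pos_divide_le_eq)
  moreover have "exp (- ((t - 1) * d)) * M = M / exp z"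
    by (simp add: z_def exp_minus divide_inverse mult.commute)
  ultimately show ?thesis by simp
qed

lemma jacobi_heat_term_le_majorant:
  assumes "a > -1" "b > -1" "1 \<le> t" "1 \<le> n" "\<bar>u\<bar> \<le> 1" "\<bar>v\<bar> \<le> 1"
  shows "exp (- t * pi\<^sup>2 * (real n * (real n + (a + b + 1)))) * jacobi_c a b n ^ 2
      * \<bar>jacobiP a b n u * jacobiP a b n v\<bar>
    \<le> exp (- ((t - 1) * (pi\<^sup>2 * (a + b + 2)))) * jacobi_heat_majorant a b n"
proof -
  have "\<bar>jacobiP a b n u * jacobiP a b n v\<bar> \<le> jacobi_coeff_sum a b n ^ 2"
    unfolding abs_mult power2_eq_square
    using abs_jacobiP_le_coeff_sum assms(5,6) jacobi_coeff_sum_nonneg by (intro mult_mono) auto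
  moreover have "a + b + 2 = 1 + (a + b + 1)" by simp
  then have "exp (- t * pi\<^sup>2 * (real n * (real n + (a + b + 1))))
      \<le> exp (- ((t - 1) * (pi\<^sup>2 * (a + b + 2)))) * exp (- (pi\<^sup>2) * real n * (real n + (a + b + 1)))"
    using assms by (simp only:) (rule exp_heat_factor_le, auto)
  ultimately have "exp (- t * pi\<^sup>2 * (real n * (real n + (a + b + 1)))) * jacobi_c a b n ^ 2
      * \<bar>jacobiP a b n u * jacobiP a b n v\<bar>
    \<le> exp (- ((t - 1) * (pi\<^sup>2 * (a + b + 2)))) * exp (- (pi\<^sup>2) * real n * (real n + (a + b + 1)))
      * jacobi_c a b n ^ 2 * jacobi_coeff_sum a b n ^ 2"
    by (intro mult_mono) auto
  then show ?thesis by (simp add: jacobi_heat_majorant_def mult_ac)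
qed

lemma abs_suminf_minus_head_le:
  fixes f g :: "nat \<Rightarrow> real"
  assumes "summable g" and "\<And>n. \<bar>f (Suc n)\<bar> \<le> \<epsilon> * g (Suc n)"
  shows "\<bar>suminf f - f 0\<bar> \<le> \<epsilon> * (\<Sum>n. g (Suc n))"
proof -
  have gs: "summable (\<lambda>n. \<epsilon> * g (Suc n))"
    using assms(1) by (intro summable_mult) (simp add: summable_Suc_iff)
  have fs: "summable (\<lambda>n. \<bar>f (Suc n)\<bar>)"
    by (rule summable_comparison_test'[OF gs, of 0]) (simp add: assms(2))
  then have "summable f"
    by (simp add: summable_rabs_cancel summable_Suc_iff[symmetric, of f])
  then have "\<bar>suminf f - f 0\<bar> = \<bar>\<Sum>n. f (Suc n)\<bar>" by (simp add: suminf_split_head)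
  also have "\<dots> \<le> (\<Sum>n. \<bar>f (Suc n)\<bar>)" by (rule summable_rabs[OF fs])
  also have "\<dots> \<le> (\<Sum>n. \<epsilon> * g (Suc n))" by (rule suminf_le[OF assms(2) fs gs])
  also have "\<dots> = \<epsilon> * (\<Sum>n. g (Suc n))"
    using assms(1) by (intro suminf_mult) (simp add: summable_Suc_iff)
  finally show ?thesis .
qed

section \<open>Comparison with the first term\<close>

definition jacobi_profile :: "real \<Rightarrow> real \<Rightarrow> real \<Rightarrow> real" where
  "jacobi_profile a b x = sin (pi * x / 2) powr (a + 1/2) * cos (pi * x / 2) powr (b + 1/2)"

lemma jacobi_profile_nonneg: "0 \<le> jacobi_profile a b x"
  by (simp add: jacobi_profile_def)

lemma jacobi_phi_tilde_eq:
  "jacobi_phi_tilde a b n x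
     = sqrt pi * jacobi_profile a b x * (jacobi_c a b n * jacobiP a b n (cos (pi * x)))"
  by (simp add: jacobi_phi_tilde_def jacobi_phi_def jacobi_P_norm_def jacobi_profile_def mult_ac)

lemma jacobi_profile_comparable:
  fixes a b x :: real
  assumes x: "0 < x" "x < 1"
  defines "K \<equiv> 2 powr \<bar>a + 1/2\<bar> * 2 powr \<bar>b + 1/2\<bar>"
  shows "jacobi_profile a b x \<le> K * (x powr (a + 1/2) * (1 - x) powr (b + 1/2))"
    and "x powr (a + 1/2) * (1 - x) powr (b + 1/2) \<le> K * jacobi_profile a b x"
proof -
  have sin_near: "z / 2 \<le> sin (pi * z / 2)" "sin (pi * z / 2) \<le> 2 * z" if "0 < z" "z < 1" for z
  proof -
    show "z / 2 \<le> sin (pi * z / 2)" using that sin_ge_div_pi[of "pi * z / 2"] by simp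
    have "sin (pi * z / 2) \<le> pi * z / 2" using that by (intro sin_x_le_x) auto
    also have "\<dots> \<le> 2 * z" using that pi_less_4 by auto
    finally show "sin (pi * z / 2) \<le> 2 * z" .
  qed
  have cos_eq: "cos (pi * x / 2) = sin (pi * (1 - x) / 2)"
    by (simp add: cos_sin_eq right_diff_distrib diff_divide_distrib)
  note s = sin_near[OF x] and c = sin_near[of "1 - x", folded cos_eq]
  have s1: "sin (pi * x / 2) powr (a + 1/2) \<le> 2 powr \<bar>a + 1/2\<bar> * x powr (a + 1/2)"
    and s2: "x powr (a + 1/2) \<le> 2 powr \<bar>a + 1/2\<bar> * sin (pi * x / 2) powr (a + 1/2)"
    using s x by (intro powr_le_of_comparable; simp add: field_simps)+
  have c1: "cos (pi * x / 2) powr (b + 1/2) \<le> 2 powr \<bar>b + 1/2\<bar> * (1 - x) powr (b + 1/2)"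
    and c2: "(1 - x) powr (b + 1/2) \<le> 2 powr \<bar>b + 1/2\<bar> * cos (pi * x / 2) powr (b + 1/2)"
    using c x by (intro powr_le_of_comparable; simp add: field_simps)+
  have "jacobi_profile a b x
      \<le> (2 powr \<bar>a + 1/2\<bar> * x powr (a + 1/2)) * (2 powr \<bar>b + 1/2\<bar> * (1 - x) powr (b + 1/2))"
    unfolding jacobi_profile_def by (intro mult_mono s1 c1) auto
  then show "jacobi_profile a b x \<le> K * (x powr (a + 1/2) * (1 - x) powr (b + 1/2))"
    by (simp add: K_def mult_ac)
  have "x powr (a + 1/2) * (1 - x) powr (b + 1/2)
      \<le> (2 powr \<bar>a + 1/2\<bar> * sin (pi * x / 2) powr (a + 1/2))
        * (2 powr \<bar>b + 1/2\<bar> * cos (pi * x / 2) powr (b + 1/2))"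
    by (intro mult_mono s2 c2) auto
  then show "x powr (a + 1/2) * (1 - x) powr (b + 1/2) \<le> K * jacobi_profile a b x"
    by (simp add: K_def jacobi_profile_def mult_ac)
qed

lemma jacobi_profile_prod_comparable:
  fixes a b x y :: real
  assumes "x \<in> {0<..<1}" "y \<in> {0<..<1}"
  defines "K \<equiv> (2 powr \<bar>a + 1/2\<bar> * 2 powr \<bar>b + 1/2\<bar>)\<^sup>2"
  defines "Q \<equiv> (x * y) powr (a + 1/2) * ((1 - x) * (1 - y)) powr (b + 1/2)"
  shows "jacobi_profile a b x * jacobi_profile a b y \<le> K * Q"
    and "Q \<le> K * (jacobi_profile a b x * jacobi_profile a b y)"
proof -
  have x: "0 < x" "x < 1" and y: "0 < y" "y < 1" using assms(1,2) by auto
  define Q\<^sub>x where "Q\<^sub>x = x powr (a + 1/2) * (1 - x) powr (b + 1/2)"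
  define Q\<^sub>y where "Q\<^sub>y = y powr (a + 1/2) * (1 - y) powr (b + 1/2)"
  have Q: "Q = Q\<^sub>x * Q\<^sub>y"
    using assms(1,2) by (simp add: Q_def Q\<^sub>x_def Q\<^sub>y_def powr_mult mult_ac)
  note px = jacobi_profile_comparable[OF x, of a b, folded Q\<^sub>x_def]
    and py = jacobi_profile_comparable[OF y, of a b, folded Q\<^sub>y_def]
  have "jacobi_profile a b x * jacobi_profile a b y
      \<le> (2 powr \<bar>a + 1/2\<bar> * 2 powr \<bar>b + 1/2\<bar> * Q\<^sub>x) * (2 powr \<bar>a + 1/2\<bar> * 2 powr \<bar>b + 1/2\<bar> * Q\<^sub>y)"
    using px(1) py(1) by (intro mult_mono) (auto simp: jacobi_profile_nonneg Q\<^sub>x_def)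
  then show "jacobi_profile a b x * jacobi_profile a b y \<le> K * Q"
    by (simp add: K_def Q power2_eq_square mult_ac)
  have "Q\<^sub>x * Q\<^sub>y \<le> (2 powr \<bar>a + 1/2\<bar> * 2 powr \<bar>b + 1/2\<bar> * jacobi_profile a b x)
      * (2 powr \<bar>a + 1/2\<bar> * 2 powr \<bar>b + 1/2\<bar> * jacobi_profile a b y)"
    using px(2) py(2) by (intro mult_mono) (auto simp: jacobi_profile_nonneg Q\<^sub>y_def)
  then show "Q \<le> K * (jacobi_profile a b x * jacobi_profile a b y)"
    by (simp add: K_def Q power2_eq_square mult_ac)
qed

lemma jacobi_phi_tilde_mult:
  "jacobi_phi_tilde a b n x * jacobi_phi_tilde a b n y
     = pi * jacobi_profile a b x * jacobi_profile a b y
       * (jacobi_c a b n ^ 2 * (jacobiP a b n (cos (pi * x)) * jacobiP a b n (cos (pi * y))))"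
proof -
  have "sqrt pi * sqrt pi = pi" by simp
  then show ?thesis unfolding jacobi_phi_tilde_eq by (simp add: power2_eq_square mult_ac)
qed

lemma jacobi_heat_kernel_term_eq:
  "exp (- t * pi\<^sup>2 * (real n + (a + b + 1) / 2)\<^sup>2) * jacobi_phi_tilde a b n x * jacobi_phi_tilde a b n y
   = pi * jacobi_profile a b x * jacobi_profile a b y * exp (- t * pi\<^sup>2 * ((a + b + 1) / 2)\<^sup>2)
     * (exp (- t * pi\<^sup>2 * (real n * (real n + (a + b + 1)))) * jacobi_c a b n ^ 2
        * (jacobiP a b n (cos (pi * x)) * jacobiP a b n (cos (pi * y))))"
proof -
  have "- t * pi\<^sup>2 * (real n + (a + b + 1) / 2)\<^sup>2
      = - t * pi\<^sup>2 * ((a + b + 1) / 2)\<^sup>2 + - t * pi\<^sup>2 * (real n * (real n + (a + b + 1)))"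
    by (simp add: power2_eq_square algebra_simps)
  then have "exp (- t * pi\<^sup>2 * (real n + (a + b + 1) / 2)\<^sup>2)
      = exp (- t * pi\<^sup>2 * ((a + b + 1) / 2)\<^sup>2) * exp (- t * pi\<^sup>2 * (real n * (real n + (a + b + 1))))"
    by (simp only: exp_add)
  then show ?thesis
    by (simp only: mult.assoc jacobi_phi_tilde_mult) (simp add: mult_ac)
qed

lemma jacobi_heat_kernel_minus_first_term_le:
  fixes a b t x y :: real
  assumes a: "a > -1" and b: "b > -1" and t: "1 \<le> t"
  defines "K \<equiv> pi * jacobi_profile a b x * jacobi_profile a b y * exp (- t * pi\<^sup>2 * ((a + b + 1) / 2)\<^sup>2)"
  shows "\<bar>jacobi_heat_kernel a b t x y - K * jacobi_c a b 0 ^ 2\<bar>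
      \<le> K * exp (- ((t - 1) * (pi\<^sup>2 * (a + b + 2)))) * (\<Sum>n. jacobi_heat_majorant a b (Suc n))"
proof -
  have K: "0 \<le> K" unfolding K_def by (simp add: jacobi_profile_nonneg)
  define f where "f n = K * (exp (- t * pi\<^sup>2 * (real n * (real n + (a + b + 1)))) * jacobi_c a b n ^ 2
      * (jacobiP a b n (cos (pi * x)) * jacobiP a b n (cos (pi * y))))" for n
  have kernel: "jacobi_heat_kernel a b t x y = suminf f"
    unfolding jacobi_heat_kernel_def jacobi_heat_kernel_term_eq f_def K_def ..
  have "\<bar>f (Suc n)\<bar>
      \<le> K * exp (- ((t - 1) * (pi\<^sup>2 * (a + b + 2)))) * jacobi_heat_majorant a b (Suc n)" for n
  proof -
    let ?P = "\<lambda>z. jacobiP a b (Suc n) (cos (pi * z))"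
    have "\<bar>f (Suc n)\<bar> = K * (exp (- t * pi\<^sup>2 * (real (Suc n) * (real (Suc n) + (a + b + 1))))
        * jacobi_c a b (Suc n) ^ 2 * \<bar>?P x * ?P y\<bar>)"
      unfolding f_def using K by (simp add: abs_mult)
    also have "\<dots> \<le> K * (exp (- ((t - 1) * (pi\<^sup>2 * (a + b + 2)))) * jacobi_heat_majorant a b (Suc n))"
      using K t by (intro mult_left_mono jacobi_heat_term_le_majorant[OF a b]) auto
    finally show ?thesis by (simp add: mult.assoc)
  qed
  then have "\<bar>suminf f - f 0\<bar>
      \<le> K * exp (- ((t - 1) * (pi\<^sup>2 * (a + b + 2)))) * (\<Sum>n. jacobi_heat_majorant a b (Suc n))"
    by (rule abs_suminf_minus_head_le[OF summable_jacobi_heat_majorant[OF a b]])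
  then show ?thesis by (simp add: kernel f_def)
qed

lemma jacobi_heat_kernel_near_first_term:
  assumes a: "a > -1" and b: "b > -1"
  shows "\<exists>T>0. \<forall>t\<ge>T. \<forall>x y.
    \<bar>jacobi_heat_kernel a b t x y - pi * jacobi_c a b 0 ^ 2 * jacobi_profile a b x * jacobi_profile a b y
        * exp (- t * pi\<^sup>2 * ((a + b + 1) / 2)\<^sup>2)\<bar>
    \<le> pi * jacobi_c a b 0 ^ 2 * jacobi_profile a b x * jacobi_profile a b y
        * exp (- t * pi\<^sup>2 * ((a + b + 1) / 2)\<^sup>2) / 2"
proof -
  define M where "M = (\<Sum>n. jacobi_heat_majorant a b (Suc n))"
  define c0 where "c0 = jacobi_c a b 0 ^ 2"
  define d where "d = pi\<^sup>2 * (a + b + 2)"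
  define T where "T = 1 + 2 * M / (c0 * d)"
  have M: "0 \<le> M" unfolding M_def using summable_jacobi_heat_majorant[OF a b]
    by (intro suminf_nonneg) (auto simp: summable_Suc_iff jacobi_heat_majorant_nonneg)
  have c0: "0 < c0" unfolding c0_def by (rule jacobi_c_0_pos[OF a b])
  have d: "0 < d" using a b by (simp add: d_def)
  have "\<bar>jacobi_heat_kernel a b t x y - pi * jacobi_c a b 0 ^ 2 * jacobi_profile a b x
        * jacobi_profile a b y * exp (- t * pi\<^sup>2 * ((a + b + 1) / 2)\<^sup>2)\<bar>
      \<le> pi * jacobi_c a b 0 ^ 2 * jacobi_profile a b x * jacobi_profile a b y
        * exp (- t * pi\<^sup>2 * ((a + b + 1) / 2)\<^sup>2) / 2"
    if t: "T \<le> t" for t x y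
  proof -
    define K where "K = pi * jacobi_profile a b x * jacobi_profile a b y
        * exp (- t * pi\<^sup>2 * ((a + b + 1) / 2)\<^sup>2)"
    have K: "0 \<le> K" unfolding K_def by (simp add: jacobi_profile_nonneg)
    have "0 \<le> 2 * M / (c0 * d)" using M c0 d by simp
    then have t1: "1 \<le> t" using t by (simp add: T_def)
    have "\<bar>jacobi_heat_kernel a b t x y - K * c0\<bar> \<le> K * exp (- ((t - 1) * d)) * M"
      unfolding K_def c0_def M_def d_def by (rule jacobi_heat_kernel_minus_first_term_le[OF a b t1])
    also have "\<dots> \<le> K * (c0 / 2)"
      unfolding mult.assoc using K c0 d M t
      by (intro mult_left_mono exp_decay_times_le_half) (auto simp: T_def)
    finally show ?thesis by (simp add: K_def c0_def mult_ac)
  qed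
  moreover have "T > 0" using M c0 d by (simp add: T_def add_pos_nonneg)
  ultimately show ?thesis by blast
qed

lemma comparable_of_abs_sub_le_half:
  fixes c K G S\<^sub>x S\<^sub>y Q E :: real
  assumes c: "0 < c" and K: "0 < K"
    and G: "\<bar>G - c * S\<^sub>x * S\<^sub>y * E\<bar> \<le> c * S\<^sub>x * S\<^sub>y * E / 2"
    and S: "S\<^sub>x * S\<^sub>y \<le> K * Q" "Q \<le> K * (S\<^sub>x * S\<^sub>y)" and E: "0 < E"
  shows "c / (2 * K) * (Q * E) \<le> G \<and> G \<le> 3 * c * K / 2 * (Q * E)"
proof -
  have QE: "Q * E / K \<le> S\<^sub>x * S\<^sub>y * E" and SE: "S\<^sub>x * S\<^sub>y * E \<le> K * (Q * E)"
    using S E K by (simp_all add: pos_divide_le_eq mult_ac mult_right_mono)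
  have "c / (2 * K) * (Q * E) = c / 2 * (Q * E / K)" by simp
  also have "\<dots> \<le> c / 2 * (S\<^sub>x * S\<^sub>y * E)"
    using c QE by (intro mult_left_mono) auto
  finally have "c / (2 * K) * (Q * E) \<le> c * S\<^sub>x * S\<^sub>y * E / 2" by (simp add: mult_ac)
  moreover have "3 * (c * S\<^sub>x * S\<^sub>y * E) / 2 \<le> 3 * c * K / 2 * (Q * E)"
  proof -
    have "3 * (c * S\<^sub>x * S\<^sub>y * E) / 2 = 3 * c / 2 * (S\<^sub>x * S\<^sub>y * E)" by simp
    also have "\<dots> \<le> 3 * c / 2 * (K * (Q * E))"
      using c SE by (intro mult_left_mono) auto
    finally show ?thesis by (simp add: mult_ac)
  qed
  moreover from G have "c * S\<^sub>x * S\<^sub>y * E / 2 \<le> G" "G \<le> 3 * (c * S\<^sub>x * S\<^sub>y * E) / 2"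
    unfolding abs_le_iff by linarith+
  ultimately show ?thesis by linarith
qed

theorem proposition3p3:
  fixes a b :: real
  assumes "a > -1" and "b > -1"
  shows "\<exists>T>0. \<exists>C1>0. \<exists>C2>0. \<forall>t\<ge>T. \<forall>x\<in>{0<..<1}. \<forall>y\<in>{0<..<1}.
     C1 * ((x * y) powr (a + 1/2) * ((1 - x) * (1 - y)) powr (b + 1/2)
           * exp (- t * pi\<^sup>2 * ((a + b + 1) / 2)\<^sup>2))
       \<le> jacobi_heat_kernel a b t x y \<and>
     jacobi_heat_kernel a b t x y
       \<le> C2 * ((x * y) powr (a + 1/2) * ((1 - x) * (1 - y)) powr (b + 1/2)
           * exp (- t * pi\<^sup>2 * ((a + b + 1) / 2)\<^sup>2))"
proof -
  obtain T where T: "T > 0" and near: "\<And>t x y. T \<le> t \<Longrightarrow>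
    \<bar>jacobi_heat_kernel a b t x y - pi * jacobi_c a b 0 ^ 2 * jacobi_profile a b x * jacobi_profile a b y
        * exp (- t * pi\<^sup>2 * ((a + b + 1) / 2)\<^sup>2)\<bar>
    \<le> pi * jacobi_c a b 0 ^ 2 * jacobi_profile a b x * jacobi_profile a b y
        * exp (- t * pi\<^sup>2 * ((a + b + 1) / 2)\<^sup>2) / 2"
    using jacobi_heat_kernel_near_first_term[OF assms] by blast
  define K where "K = (2 powr \<bar>a + 1/2\<bar> * 2 powr \<bar>b + 1/2\<bar>)\<^sup>2"
  define c where "c = pi * jacobi_c a b 0 ^ 2"
  have K: "0 < K" by (simp add: K_def)
  have c: "0 < c" using jacobi_c_0_pos[OF assms] by (simp add: c_def)
  have "c / (2 * K) * ((x * y) powr (a + 1/2) * ((1 - x) * (1 - y)) powr (b + 1/2)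
        * exp (- t * pi\<^sup>2 * ((a + b + 1) / 2)\<^sup>2)) \<le> jacobi_heat_kernel a b t x y
      \<and> jacobi_heat_kernel a b t x y \<le> 3 * c * K / 2 * ((x * y) powr (a + 1/2)
        * ((1 - x) * (1 - y)) powr (b + 1/2) * exp (- t * pi\<^sup>2 * ((a + b + 1) / 2)\<^sup>2))"
    if "T \<le> t" "x \<in> {0<..<1}" "y \<in> {0<..<1}" for t x y
    by (rule comparable_of_abs_sub_le_half[OF c K near[OF that(1), of x y, folded c_def]
          jacobi_profile_prod_comparable[OF that(2,3), of a b, folded K_def]]) simp
  then show ?thesis
    using T c K by (intro exI[of _ T] exI[of _ "c / (2 * K)"] exI[of _ "3 * c * K / 2"] conjI) auto
qed

end
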